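(* Under the sampling and reduction setup described in the context, $$\mathrm{P}\big[\hat n<4gn/s\big]\ge 1-4e^{-2g^2/s}\qquad\text{and}\qquad \mathrm{E}\,\hat n\le 4gn/s+4ne^{-2g^2/s}.$$
   Context: Sampling setup. Let $X=(x_1,\dots,x_n)$ be a list of $n\ge 2$ elements of a totally ordered set; repeated values are allowed. Let $k$ be an integer with $1\le k\le n$, let $s$ be an integer with $1\le s\le n-1$, and let $g>0$ be real. A set $I\subset\{1,\dots,n\}$ of $s$ positions is chosen uniformly at random among all $s$-element subsets. The sample $(x_j)_{j\in I}$ has sorted elements $y_1^*\le\dots\le y_s^*$. Define $i_u:=\max\{\lceil ks/n-g\rceil,1\}$, $i_v:=\min\{\lceil ks/n+g\rceil,s\}$, $u:=y_{i_u}^*$ and $v:=y_{i_v}^*$. Reduction. Partition the positions of $X$ into - $L=\{j:x_j<u\}$, - $U=\{j:x_j=u\}$, - $M=\{j:u<x_j<v\}$, - $V=\{j:x_j=v\}$, - $R=\{j:x_j>v\}$. Define the residual size $\hat n$ by the first applicable rule: 1. If $|L|<k\le|L\cup U|$ or $|L\cup U\cup M|<k\le n-|R|$, then $\hat n:=0$. 2. Otherwise, if $k\le|L|$, then $\hat n:=|L|$. 3. Otherwise, if $n-|R|<k$, then $\hat n:=|R|$. 4. Otherwise, $\hat n:=|M|$. $\mathrm{P}$ and $\mathrm{E}$ denote probability and expectation with respect to the random choice of $I$. *)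

theory Defs
  imports "HOL-Probability.Probability"
begin

text \<open>Positions of the list X are 0-based: {0..<length X}. Ranks (k, i_u, i_v) are 1-based.\<close>

definition sample_space :: "nat \<Rightarrow> nat \<Rightarrow> nat set set" where
  "sample_space n s = {I. I \<subseteq> {0..<n} \<and> card I = s}"

definition sorted_sample :: "'a::linorder list \<Rightarrow> nat set \<Rightarrow> 'a list" where
  "sorted_sample X I = sort (map (\<lambda>j. X ! j) (sorted_list_of_set I))"

definition idx_u :: "nat \<Rightarrow> nat \<Rightarrow> nat \<Rightarrow> real \<Rightarrow> nat" where
  "idx_u n k s g = nat (max (ceiling (real k * real s / real n - g)) 1)"

definition idx_v :: "nat \<Rightarrow> nat \<Rightarrow> nat \<Rightarrow> real \<Rightarrow> nat" where
  "idx_v n k s g = nat (min (ceiling (real k * real s / real n + g)) (int s))"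

definition ystar :: "'a::linorder list \<Rightarrow> nat set \<Rightarrow> nat \<Rightarrow> 'a" where
  "ystar X I i = sorted_sample X I ! (i - 1)"

definition pivot_u :: "'a::linorder list \<Rightarrow> nat \<Rightarrow> nat \<Rightarrow> real \<Rightarrow> nat set \<Rightarrow> 'a" where
  "pivot_u X k s g I = ystar X I (idx_u (length X) k s g)"

definition pivot_v :: "'a::linorder list \<Rightarrow> nat \<Rightarrow> nat \<Rightarrow> real \<Rightarrow> nat set \<Rightarrow> 'a" where
  "pivot_v X k s g I = ystar X I (idx_v (length X) k s g)"

definition residual_size :: "'a::linorder list \<Rightarrow> nat \<Rightarrow> nat \<Rightarrow> real \<Rightarrow> nat set \<Rightarrow> nat" where
  "residual_size X k s g I =
    (let n = length X; u = pivot_u X k s g I; v = pivot_v X k s g I;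
         L = {j \<in> {0..<n}. X ! j < u};
         U = {j \<in> {0..<n}. X ! j = u};
         M = {j \<in> {0..<n}. u < X ! j \<and> X ! j < v};
         R = {j \<in> {0..<n}. v < X ! j}
     in if (card L < k \<and> k \<le> card (L \<union> U)) \<or> (card (L \<union> U \<union> M) < k \<and> k \<le> n - card R) then 0
        else if k \<le> card L then card L
        else if n - card R < k then card R
        else card M)"

end

theory Submission
  imports Defs
begin

(* If the residual size reaches T = 4gn/s, one of four events occurs: at least max(k, T)
   population elements lie below u; at most min(k - 1, n - T) lie at or below v; at most k - T/2
   lie at or below u; or at least k + T/2 lie below v (otherwise the middle part has fewer than
   T elements). In each event a sample order statistic y*_i overshoots or undershoots a fixed
   population order statistic t, i.e. the number of sampled positions in the fixed set
   {j. x_j <= t} or {j. x_j < t} deviates from its hypergeometric mean by at least g. Hoeffding's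
   bound for sampling without replacement (a Chernoff argument, after comparing the binomial
   moments with those of sampling with replacement) bounds each event by exp(-2g^2/s). A union
   bound gives the tail estimate; since the residual size never exceeds n, its expectation is at
   most T + n P[residual >= T]. *)

lemma finite_sample_space: "finite (sample_space n s)"
  unfolding sample_space_def by (rule finite_subset[of _ "Pow {0..<n}"]) auto

lemma card_sample_space: "card (sample_space n s) = n choose s"
  unfolding sample_space_def by (subst n_subsets) auto

lemma mem_sample_spaceD:
  assumes "I \<in> sample_space n s"
  shows "finite I" "card I = s" "I \<subseteq> {0..<n}"
  using assms finite_subset by (auto simp: sample_space_def)

lemma sample_space_nonempty: "s \<le> n \<Longrightarrow> sample_space n s \<noteq> {}"
  using card_sample_space[of n s] by (metis card.empty zero_less_binomial_iff less_numeral_extra(3))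

lemma prob_sample_space_mono:
  assumes "s \<le> n" and "\<And>I. I \<in> sample_space n s \<Longrightarrow> I \<in> E \<Longrightarrow> I \<in> F"
  shows "measure_pmf.prob (pmf_of_set (sample_space n s)) E \<le> measure_pmf.prob (pmf_of_set (sample_space n s)) F"
  using assms sample_space_nonempty[of s n]
  by (intro measure_pmf.finite_measure_mono_AE) (auto simp: AE_measure_pmf_iff finite_sample_space)

lemma card_sample_space_supersets:
  assumes T: "T \<subseteq> {0..<n}" "card T \<le> s"
  shows "card {I \<in> sample_space n s. T \<subseteq> I} = (n - card T) choose (s - card T)"
proof -
  have fin: "finite T" using T(1) finite_subset by blast
  have "bij_betw (\<lambda>I. I - T) {I \<in> sample_space n s. T \<subseteq> I} {J. J \<subseteq> {0..<n} - T \<and> card J = s - card T}"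
  proof (rule bij_betw_byWitness[where f' = "\<lambda>J. J \<union> T"])
    show "(\<lambda>I. I - T) ` {I \<in> sample_space n s. T \<subseteq> I} \<subseteq> {J. J \<subseteq> {0..<n} - T \<and> card J = s - card T}"
      using fin by (auto simp: sample_space_def card_Diff_subset)
    have "card (J \<union> T) = s" if "J \<subseteq> {0..<n} - T" "card J = s - card T" for J
    proof -
      have "finite J" using that(1) finite_subset by blast
      then show ?thesis using that T fin by (subst card_Un_disjoint) auto
    qed
    then show "(\<lambda>J. J \<union> T) ` {J. J \<subseteq> {0..<n} - T \<and> card J = s - card T} \<subseteq> {I \<in> sample_space n s. T \<subseteq> I}"
      using T by (auto simp: sample_space_def)
  qed auto
  then have "card {I \<in> sample_space n s. T \<subseteq> I} = card ({0..<n} - T) choose (s - card T)"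
    by (simp add: bij_betw_same_card n_subsets)
  then show ?thesis
    using T fin by (simp add: card_Diff_subset)
qed

lemma sum_choose_card_Int:
  assumes A: "A \<subseteq> {0..<n}" and "m \<le> s"
  shows "(\<Sum>I\<in>sample_space n s. card (I \<inter> A) choose m) = (card A choose m) * ((n - m) choose (s - m))"
proof -
  define S where "S = {T. T \<subseteq> A \<and> card T = m}"
  have "finite A" using A finite_subset by blast
  then have fin: "finite A" "finite S"
    unfolding S_def by (auto intro: finite_subset[of _ "Pow A"])
  have "(\<Sum>I\<in>sample_space n s. card (I \<inter> A) choose m) = (\<Sum>I\<in>sample_space n s. card {T\<in>S. T \<subseteq> I})"
    using fin by (intro sum.cong refl) (auto simp: S_def n_subsets[symmetric] intro: arg_cong[where f = card])
  also have "\<dots> = (\<Sum>T\<in>S. card {I \<in> sample_space n s. T \<subseteq> I})"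
    using sum.swap_restrict[OF finite_sample_space[of n s] fin(2), of "\<lambda>_ _. 1::nat" "\<lambda>I T. T \<subseteq> I"]
    by simp
  also have "\<dots> = (\<Sum>T\<in>S. (n - m) choose (s - m))"
    using A \<open>m \<le> s\<close> by (intro sum.cong refl) (auto simp: S_def card_sample_space_supersets)
  also have "\<dots> = (card A choose m) * ((n - m) choose (s - m))"
    using fin by (simp add: S_def n_subsets)
  finally show ?thesis .
qed

lemma choose_times_power_le:
  assumes "K \<le> n"
  shows "real (K choose m) * real n ^ m \<le> real (n choose m) * real K ^ m"
proof (induction m)
  case 0
  then show ?case by simp
next
  case (Suc m)
  have absorb: "real (Suc m) * real (N choose Suc m) = real (N - m) * real (N choose m)" for N
    using binomial_absorption[of m N] binomial_absorb_comp[of N m] by (metis of_nat_mult)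
  have step: "real (K - m) * real n \<le> real (n - m) * real K"
  proof (cases "m \<le> K")
    case True
    have "real K * real m \<le> real n * real m" using assms by (intro mult_right_mono) auto
    then show ?thesis using True assms by (simp add: algebra_simps)
  qed simp
  have "real (Suc m) * (real (K choose Suc m) * real n ^ Suc m)
        = (real (Suc m) * real (K choose Suc m)) * (real n * real n ^ m)"
    by (simp only: power_Suc mult_ac)
  also have "\<dots> = (real (K - m) * real n) * (real (K choose m) * real n ^ m)"
    by (simp only: absorb mult_ac)
  also have "\<dots> \<le> (real (n - m) * real K) * (real (n choose m) * real K ^ m)"
    by (rule mult_mono[OF step Suc.IH]) auto
  also have "\<dots> = (real (Suc m) * real (n choose Suc m)) * (real K * real K ^ m)"
    by (simp only: absorb mult_ac)
  also have "\<dots> = real (Suc m) * (real (n choose Suc m) * real K ^ Suc m)"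
    by (simp only: power_Suc mult_ac)
  finally show ?case
    by (simp del: of_nat_Suc)
qed

lemma sum_power_card_Int_eq:
  fixes c :: real
  assumes A: "A \<subseteq> {0..<n}"
  shows "(\<Sum>I\<in>sample_space n s. (1 + c) ^ card (I \<inter> A))
           = (\<Sum>m\<le>s. c ^ m * (real (card A choose m) * real ((n - m) choose (s - m))))"
proof -
  have binomial: "(1 + c) ^ card (I \<inter> A) = (\<Sum>m\<le>s. c ^ m * real (card (I \<inter> A) choose m))"
    if "I \<in> sample_space n s" for I
  proof -
    have "card (I \<inter> A) \<le> s"
      using card_mono[of I "I \<inter> A"] mem_sample_spaceD[OF that] by auto
    then show ?thesis
      using binomial_ring[of c 1 "card (I \<inter> A)"]
      by (simp add: add.commute mult.commute) (intro sum.mono_neutral_left; auto)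
  qed
  have "(\<Sum>I\<in>sample_space n s. (1 + c) ^ card (I \<inter> A))
          = (\<Sum>I\<in>sample_space n s. \<Sum>m\<le>s. c ^ m * real (card (I \<inter> A) choose m))"
    by (rule sum.cong) (simp_all add: binomial)
  also have "\<dots> = (\<Sum>m\<le>s. \<Sum>I\<in>sample_space n s. c ^ m * real (card (I \<inter> A) choose m))"
    by (rule sum.swap)
  also have "\<dots> = (\<Sum>m\<le>s. c ^ m * real (\<Sum>I\<in>sample_space n s. card (I \<inter> A) choose m))"
    by (simp add: sum_distrib_left)
  also have "\<dots> = (\<Sum>m\<le>s. c ^ m * (real (card A choose m) * real ((n - m) choose (s - m))))"
    by (simp add: sum_choose_card_Int[OF A])
  finally show ?thesis .
qed

text \<open>The binomial moments of the hypergeometric count are dominated by those of sampling with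
  replacement, so its moment generating function is at most the binomial one.\<close>

lemma expectation_power_card_Int_le:
  assumes A: "A \<subseteq> {0..<n}" and "s \<le> n" "0 < n" "0 \<le> c"
  shows "measure_pmf.expectation (pmf_of_set (sample_space n s)) (\<lambda>I. (1 + c) ^ card (I \<inter> A))
           \<le> (1 + c * real (card A) / real n) ^ s"
proof -
  define K where "K = card A"
  have "K \<le> n"
    unfolding K_def using card_mono[OF finite_atLeastLessThan A] by simp
  have moment_le: "real (K choose m) * real ((n - m) choose (s - m))
                     \<le> real (n choose s) * (real (s choose m) * (real K / real n) ^ m)" if "m \<le> s" for m
  proof -
    have "real (K choose m) \<le> real (n choose m) * (real K / real n) ^ m"
      using choose_times_power_le[OF \<open>K \<le> n\<close>, of m] \<open>0 < n\<close> by (simp add: power_divide pos_le_divide_eq)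
    then have "real (K choose m) * real ((n - m) choose (s - m))
                 \<le> real (n choose m) * (real K / real n) ^ m * real ((n - m) choose (s - m))"
      by (rule mult_right_mono) simp
    also have "\<dots> = real ((n choose m) * ((n - m) choose (s - m))) * (real K / real n) ^ m"
      by (simp only: of_nat_mult mult_ac)
    also have "\<dots> = real ((n choose s) * (s choose m)) * (real K / real n) ^ m"
      using choose_mult[OF \<open>m \<le> s\<close> \<open>s \<le> n\<close>] by simp
    finally show ?thesis
      by (simp add: mult.assoc)
  qed
  have "(\<Sum>I\<in>sample_space n s. (1 + c) ^ card (I \<inter> A))
          \<le> (\<Sum>m\<le>s. c ^ m * (real (n choose s) * (real (s choose m) * (real K / real n) ^ m)))"
    unfolding sum_power_card_Int_eq[OF A] K_def[symmetric]
    using moment_le \<open>0 \<le> c\<close> by (intro sum_mono mult_left_mono) auto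
  also have "\<dots> = real (n choose s) * (\<Sum>m\<le>s. real (s choose m) * (c * real K / real n) ^ m)"
    by (simp add: sum_distrib_left power_mult_distrib power_divide mult_ac)
  also have "\<dots> = real (n choose s) * (1 + c * real K / real n) ^ s"
    using binomial_ring[of "c * real K / real n" 1 s] by (simp add: add.commute)
  finally show ?thesis
    using \<open>s \<le> n\<close> sample_space_nonempty[of s n]
    by (simp add: integral_pmf_of_set finite_sample_space card_sample_space K_def divide_le_eq mult.commute)
qed

lemma hypergeometric_upper_tail:
  assumes A: "A \<subseteq> {0..<n}" and "0 < s" "s \<le> n" "0 \<le> t"
  shows "measure_pmf.prob (pmf_of_set (sample_space n s))
           {I. real s * real (card A) / real n + t \<le> real (card (I \<inter> A))} \<le> exp (- 2 * t\<^sup>2 / real s)"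
proof -
  define P where "P = pmf_of_set (sample_space n s)"
  define p where "p = real (card A) / real n"
  define l where "l = 4 * t / real s"
  have "0 \<le> l" "0 \<le> p" "0 < n"
    using assms by (auto simp: l_def p_def)
  have "measure_pmf.prob P {I. real s * p + t \<le> real (card (I \<inter> A))}
          \<le> measure_pmf.prob P {I. exp (l * (real s * p + t)) \<le> exp l ^ card (I \<inter> A)}"
    using \<open>0 \<le> l\<close> by (intro measure_pmf.finite_measure_mono)
      (auto simp: exp_of_nat_mult[symmetric] mult.commute intro: mult_left_mono)
  also have "\<dots> \<le> measure_pmf.expectation P (\<lambda>I. exp l ^ card (I \<inter> A)) / exp (l * (real s * p + t))"
    using integral_Markov_inequality_measure[of P "\<lambda>I. exp l ^ card (I \<inter> A)" UNIV]
    using sample_space_nonempty[of s n] \<open>s \<le> n\<close>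
    by (simp add: P_def integrable_measure_pmf_finite finite_sample_space)
  also have "\<dots> \<le> (1 + (exp l - 1) * p) ^ s / exp (l * (real s * p + t))"
    using expectation_power_card_Int_le[OF A \<open>s \<le> n\<close> \<open>0 < n\<close>, of "exp l - 1"] \<open>0 \<le> l\<close>
    by (intro divide_right_mono) (auto simp: P_def p_def)
  also have "\<dots> \<le> exp (l * p + l\<^sup>2 / 8) ^ s / exp (l * (real s * p + t))"
  proof -
    have "ln (1 + p * (exp l - 1)) \<le> l * p + l\<^sup>2 / 8"
      using Hoeffdings_lemma_aux[OF \<open>0 \<le> l\<close> \<open>0 \<le> p\<close>] by simp
    then have "exp (ln (1 + p * (exp l - 1))) \<le> exp (l * p + l\<^sup>2 / 8)"
      by simp
    then have "1 + (exp l - 1) * p \<le> exp (l * p + l\<^sup>2 / 8)"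
      using \<open>0 \<le> l\<close> \<open>0 \<le> p\<close> by (simp add: mult.commute add_pos_nonneg)
    then show ?thesis
      using \<open>0 \<le> l\<close> \<open>0 \<le> p\<close> by (intro divide_right_mono power_mono) auto
  qed
  also have "\<dots> = exp (- 2 * t\<^sup>2 / real s)"
    using \<open>0 < s\<close> by (simp add: exp_of_nat_mult[symmetric] exp_diff[symmetric] l_def field_simps power2_eq_square)
  finally show ?thesis
    by (simp add: P_def p_def)
qed

lemma hypergeometric_lower_tail:
  assumes A: "A \<subseteq> {0..<n}" and "0 < s" "s \<le> n" "0 \<le> t"
  shows "measure_pmf.prob (pmf_of_set (sample_space n s))
           {I. real (card (I \<inter> A)) \<le> real s * real (card A) / real n - t} \<le> exp (- 2 * t\<^sup>2 / real s)"
proof -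
  define A' where "A' = {0..<n} - A"
  have "finite A" using A finite_subset by blast
  then have card_A': "real (card A') = real n - real (card A)"
    using A by (simp add: A'_def card_Diff_subset card_mono[of "{0..<n}" A, simplified])
  have "real (card (I \<inter> A')) = real s - real (card (I \<inter> A))" if "I \<in> sample_space n s" for I
  proof -
    have "I \<inter> A' = I - I \<inter> A" "finite I" "card I = s"
      using mem_sample_spaceD[OF that] by (auto simp: A'_def)
    moreover have "card (I \<inter> A) \<le> card I"
      using \<open>finite I\<close> by (intro card_mono) auto
    ultimately show ?thesis
      by (simp add: card_Diff_subset)
  qed
  moreover have "real s * real (card A') / real n = real s - real s * real (card A) / real n"
    using card_A' \<open>0 < s\<close> \<open>s \<le> n\<close> by (simp add: right_diff_distrib diff_divide_distrib)
  ultimately have "measure_pmf.prob (pmf_of_set (sample_space n s))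
           {I. real (card (I \<inter> A)) \<le> real s * real (card A) / real n - t}
      \<le> measure_pmf.prob (pmf_of_set (sample_space n s))
           {I. real s * real (card A') / real n + t \<le> real (card (I \<inter> A'))}"
    using \<open>s \<le> n\<close> by (intro prob_sample_space_mono) auto
  also have "\<dots> \<le> exp (- 2 * t\<^sup>2 / real s)"
    using assms by (intro hypergeometric_upper_tail) (auto simp: A'_def)
  finally show ?thesis .
qed

lemma sorted_nth_iff_less_length_filter:
  assumes "sorted zs" "i < length zs" and down: "\<And>x y. P y \<Longrightarrow> x \<le> y \<Longrightarrow> P x"
  shows "P (zs ! i) \<longleftrightarrow> i < length (filter P zs)"
  using assms(1,2)
proof (induction zs arbitrary: i)
  case Nil
  then show ?case by simp
next
  case (Cons x zs)
  have below: "x \<le> z" if "z \<in> set zs" for z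
    using Cons.prems(1) that by simp
  show ?case
  proof (cases i)
    case 0
    have "filter P zs = []" if "\<not> P x"
      using below down that by (auto simp: filter_empty_conv)
    then show ?thesis
      using 0 by auto
  next
    case (Suc j)
    then have "j < length zs"
      using Cons.prems(2) by simp
    have "\<not> P (zs ! j)" if "\<not> P x"
      using below[OF nth_mem[OF \<open>j < length zs\<close>]] down that by blast
    then show ?thesis
      using Cons.IH[of j] Cons.prems(1) Suc \<open>j < length zs\<close> by auto
  qed
qed

lemma ystar_iff_le_card:
  assumes "finite I" "1 \<le> i" "i \<le> card I" and down: "\<And>x y. P y \<Longrightarrow> x \<le> y \<Longrightarrow> P x"
  shows "P (ystar X I i) \<longleftrightarrow> i \<le> card {j\<in>I. P (X ! j)}"
proof -
  define xs where "xs = map (\<lambda>j. X ! j) (sorted_list_of_set I)"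
  have "length (filter P (sort xs)) = length (filter P xs)"
    by (metis filter_sort length_sort)
  also have "\<dots> = length (filter (\<lambda>j. P (X ! j)) (sorted_list_of_set I))"
    by (simp add: xs_def filter_map comp_def)
  also have "\<dots> = card ({j. P (X ! j)} \<inter> I)"
    using \<open>finite I\<close> by (subst distinct_length_filter) auto
  also have "{j. P (X ! j)} \<inter> I = {j\<in>I. P (X ! j)}"
    by blast
  finally have "length (filter P (sort xs)) = card {j\<in>I. P (X ! j)}" .
  moreover have "P (sort xs ! (i - 1)) \<longleftrightarrow> i - 1 < length (filter P (sort xs))"
    using assms by (intro sorted_nth_iff_less_length_filter) (auto simp: xs_def)
  ultimately show ?thesis
    using \<open>1 \<le> i\<close> by (auto simp: ystar_def sorted_sample_def xs_def)
qed

lemma ystar_less_iff: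
  "finite I \<Longrightarrow> 1 \<le> i \<Longrightarrow> i \<le> card I \<Longrightarrow> ystar X I i < w \<longleftrightarrow> i \<le> card {j\<in>I. X ! j < w}"
  by (rule ystar_iff_le_card) auto

lemma ystar_le_iff:
  "finite I \<Longrightarrow> 1 \<le> i \<Longrightarrow> i \<le> card I \<Longrightarrow> ystar X I i \<le> w \<longleftrightarrow> i \<le> card {j\<in>I. X ! j \<le> w}"
  by (rule ystar_iff_le_card) auto

lemma card_filter_atLeastLessThan_le: "card {j\<in>{0..<n}. P j} \<le> n"
proof -
  have "card {j\<in>{0..<n}. P j} \<le> card {0..<n}"
    by (intro card_mono) auto
  then show ?thesis
    by simp
qed

lemma of_nat_mult_divide_mono: "a \<le> b \<Longrightarrow> real s * a / real n \<le> real s * b / real n"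
  by (intro divide_right_mono mult_left_mono) auto

text \<open>ystar X {0..<n} m is the m-th smallest population element. Comparing the sample order
  statistic with it turns rank events into tail events for the fixed set of positions below it.\<close>

lemma card_Int_atMost_population_ystar_less:
  assumes "I \<in> sample_space n s" "1 \<le> i" "i \<le> s" "1 \<le> m" "m \<le> n"
    and "m \<le> card {j\<in>{0..<n}. X ! j < ystar X I i}"
  shows "card (I \<inter> {j\<in>{0..<n}. X ! j \<le> ystar X {0..<n} m}) < i"
proof -
  note I = mem_sample_spaceD[OF assms(1)]
  have "ystar X {0..<n} m < ystar X I i"
    using ystar_less_iff[of "{0..<n}" m X "ystar X I i"] assms by simp
  then have "\<not> i \<le> card {j\<in>I. X ! j \<le> ystar X {0..<n} m}"
    using ystar_le_iff[of I i X "ystar X {0..<n} m"] I assms(2,3) by auto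
  moreover have "{j\<in>I. X ! j \<le> ystar X {0..<n} m} = I \<inter> {j\<in>{0..<n}. X ! j \<le> ystar X {0..<n} m}"
    using I by auto
  ultimately show ?thesis
    by simp
qed

lemma card_Int_lessThan_population_ystar_ge:
  assumes "I \<in> sample_space n s" "1 \<le> i" "i \<le> s" "1 \<le> m" "m \<le> n"
    and "card {j\<in>{0..<n}. X ! j \<le> ystar X I i} < m"
  shows "i \<le> card (I \<inter> {j\<in>{0..<n}. X ! j < ystar X {0..<n} m})"
proof -
  note I = mem_sample_spaceD[OF assms(1)]
  have "\<not> ystar X {0..<n} m \<le> ystar X I i"
    using ystar_le_iff[of "{0..<n}" m X "ystar X I i"] assms by simp
  then have "i \<le> card {j\<in>I. X ! j < ystar X {0..<n} m}"
    using ystar_less_iff[of I i X "ystar X {0..<n} m"] I assms(2,3) by auto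
  moreover have "{j\<in>I. X ! j < ystar X {0..<n} m} = I \<inter> {j\<in>{0..<n}. X ! j < ystar X {0..<n} m}"
    using I by auto
  ultimately show ?thesis
    by simp
qed

lemma prob_card_less_ystar_ge_rank:
  assumes "s \<le> n" "1 \<le> i" "i \<le> s" "1 \<le> m" "m \<le> n" "0 < t"
    and margin: "real i - 1 + t \<le> real s * real m / real n"
  shows "measure_pmf.prob (pmf_of_set (sample_space n s))
           {I. m \<le> card {j\<in>{0..<n}. X ! j < ystar X I i}} \<le> exp (- 2 * t\<^sup>2 / real s)"
proof -
  define A where "A = {j\<in>{0..<n}. X ! j \<le> ystar X {0..<n} m}"
  have "m \<le> card A"
    using ystar_le_iff[of "{0..<n}" m X "ystar X {0..<n} m"] assms(4,5) by (simp add: A_def)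
  then have "real s * real m / real n \<le> real s * real (card A) / real n"
    by (intro of_nat_mult_divide_mono) simp
  then have "real (card (I \<inter> A)) \<le> real s * real (card A) / real n - t"
    if "I \<in> sample_space n s" "m \<le> card {j\<in>{0..<n}. X ! j < ystar X I i}" for I
    using card_Int_atMost_population_ystar_less[OF that(1) assms(2-5) that(2)] margin
    by (simp add: A_def nat_less_real_le)
  then have "measure_pmf.prob (pmf_of_set (sample_space n s))
               {I. m \<le> card {j\<in>{0..<n}. X ! j < ystar X I i}}
             \<le> measure_pmf.prob (pmf_of_set (sample_space n s))
               {I. real (card (I \<inter> A)) \<le> real s * real (card A) / real n - t}"
    using \<open>s \<le> n\<close> by (intro prob_sample_space_mono) auto
  also have "\<dots> \<le> exp (- 2 * t\<^sup>2 / real s)"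
    using assms by (intro hypergeometric_lower_tail) (auto simp: A_def)
  finally show ?thesis .
qed

lemma prob_card_le_ystar_less_rank:
  assumes "s \<le> n" "1 \<le> i" "i \<le> s" "1 \<le> m" "m \<le> n" "0 < t"
    and margin: "real s * (real m - 1) / real n + t \<le> real i"
  shows "measure_pmf.prob (pmf_of_set (sample_space n s))
           {I. card {j\<in>{0..<n}. X ! j \<le> ystar X I i} < m} \<le> exp (- 2 * t\<^sup>2 / real s)"
proof -
  define A where "A = {j\<in>{0..<n}. X ! j < ystar X {0..<n} m}"
  have "card A < m"
    using ystar_less_iff[of "{0..<n}" m X "ystar X {0..<n} m"] assms(4,5) by (simp add: A_def)
  then have "real s * real (card A) / real n \<le> real s * (real m - 1) / real n"
    by (intro of_nat_mult_divide_mono) (simp add: nat_less_real_le)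
  then have "real s * real (card A) / real n + t \<le> real (card (I \<inter> A))"
    if "I \<in> sample_space n s" "card {j\<in>{0..<n}. X ! j \<le> ystar X I i} < m" for I
    using card_Int_lessThan_population_ystar_ge[OF that(1) assms(2-5) that(2)] margin
    by (simp add: A_def)
  then have "measure_pmf.prob (pmf_of_set (sample_space n s))
               {I. card {j\<in>{0..<n}. X ! j \<le> ystar X I i} < m}
             \<le> measure_pmf.prob (pmf_of_set (sample_space n s))
               {I. real s * real (card A) / real n + t \<le> real (card (I \<inter> A))}"
    using \<open>s \<le> n\<close> by (intro prob_sample_space_mono) auto
  also have "\<dots> \<le> exp (- 2 * t\<^sup>2 / real s)"
    using assms by (intro hypergeometric_upper_tail) (auto simp: A_def)
  finally show ?thesis .
qed

lemma prob_card_less_ystar_ge: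
  assumes "s \<le> n" "1 \<le> i" "i \<le> s" "0 < t"
    and margin: "real i - 1 + t \<le> real s * a / real n"
  shows "measure_pmf.prob (pmf_of_set (sample_space n s))
           {I. a \<le> real (card {j\<in>{0..<n}. X ! j < ystar X I i})} \<le> exp (- 2 * t\<^sup>2 / real s)"
proof -
  have "1 \<le> real i"
    using \<open>1 \<le> i\<close> by simp
  then have "0 < real s * a / real n"
    using margin \<open>0 < t\<close> by linarith
  then have "0 < a"
    by (auto simp: zero_less_divide_iff zero_less_mult_iff)
  define m where "m = nat \<lceil>a\<rceil>"
  have "real m = real_of_int \<lceil>a\<rceil>" "1 \<le> m"
    using \<open>0 < a\<close> by (simp_all add: m_def le_nat_iff)
  then have "a \<le> real m"
    using le_of_int_ceiling[of a] by linarith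
  have event_eq: "{I. a \<le> real (card {j\<in>{0..<n}. X ! j < ystar X I i})}
                   = {I. m \<le> card {j\<in>{0..<n}. X ! j < ystar X I i}}"
    by (simp add: m_def ceiling_le_iff nat_le_iff)
  show ?thesis
  proof (cases "m \<le> n")
    case False
    have "\<not> m \<le> card {j\<in>{0..<n}. X ! j < ystar X I i}" for I
      using card_filter_atLeastLessThan_le[of n "\<lambda>j. X ! j < ystar X I i"] False by linarith
    then have empty: "{I. m \<le> card {j\<in>{0..<n}. X ! j < ystar X I i}} = {}"
      by blast
    show ?thesis
      unfolding event_eq empty by simp
  next
    case True
    have "real i - 1 + t \<le> real s * real m / real n"
      using margin of_nat_mult_divide_mono[OF \<open>a \<le> real m\<close>, of s n] by linarith
    then show ?thesis
      unfolding event_eq using assms \<open>1 \<le> m\<close> True by (intro prob_card_less_ystar_ge_rank) auto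
  qed
qed

lemma prob_card_le_ystar_le:
  assumes "s \<le> n" "1 \<le> i" "i \<le> s" "0 < t"
    and margin: "real s * a / real n + t \<le> real i"
  shows "measure_pmf.prob (pmf_of_set (sample_space n s))
           {I. real (card {j\<in>{0..<n}. X ! j \<le> ystar X I i}) \<le> a} \<le> exp (- 2 * t\<^sup>2 / real s)"
proof (cases "0 \<le> a")
  case False
  then show ?thesis
    by (simp add: not_le order.strict_trans2)
next
  case True
  define m where "m = nat \<lfloor>a\<rfloor> + 1"
  have "real m = real_of_int \<lfloor>a\<rfloor> + 1" "1 \<le> m"
    using True by (simp_all add: m_def)
  then have "real m - 1 \<le> a"
    using of_int_floor_le[of a] by linarith
  have "real c \<le> a \<longleftrightarrow> c < m" for c :: nat
    using True by (simp add: m_def less_Suc_eq_le le_nat_iff le_floor_iff)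
  then have event_eq: "{I. real (card {j\<in>{0..<n}. X ! j \<le> ystar X I i}) \<le> a}
                   = {I. card {j\<in>{0..<n}. X ! j \<le> ystar X I i} < m}"
    by simp
  have "m \<le> n"
  proof (rule ccontr)
    assume "\<not> m \<le> n"
    then have "real n + 1 \<le> real m"
      using nat_less_real_le[of n m] by simp
    then have "real s * real n / real n \<le> real s * a / real n"
      using \<open>real m - 1 \<le> a\<close> by (intro of_nat_mult_divide_mono) linarith
    moreover have "real s * real n / real n = real s" and "real i \<le> real s"
      using assms by auto
    ultimately show False
      using margin \<open>0 < t\<close> by linarith
  qed
  have "real s * (real m - 1) / real n + t \<le> real i"
    using margin of_nat_mult_divide_mono[OF \<open>real m - 1 \<le> a\<close>, of s n] by linarith
  then show ?thesis
    unfolding event_eq using assms \<open>1 \<le> m\<close> \<open>m \<le> n\<close> by (intro prob_card_le_ystar_less_rank) auto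
qed

lemma residual_size_cases:
  fixes X :: "'a::linorder list" and k s :: nat and g :: real and I :: "nat set"
  defines "n \<equiv> length X" and "u \<equiv> pivot_u X k s g I" and "v \<equiv> pivot_v X k s g I"
  obtains "residual_size X k s g I = 0"
  | "k \<le> card {j\<in>{0..<n}. X ! j < u}" "residual_size X k s g I = card {j\<in>{0..<n}. X ! j < u}"
  | "n - card {j\<in>{0..<n}. v < X ! j} < k" "residual_size X k s g I = card {j\<in>{0..<n}. v < X ! j}"
  | "residual_size X k s g I = card {j\<in>{0..<n}. u < X ! j \<and> X ! j < v}"
proof -
  obtain c where "residual_size X k s g I =
      (if c then 0
       else if k \<le> card {j\<in>{0..<n}. X ! j < u} then card {j\<in>{0..<n}. X ! j < u}
       else if n - card {j\<in>{0..<n}. v < X ! j} < k then card {j\<in>{0..<n}. v < X ! j}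
       else card {j\<in>{0..<n}. u < X ! j \<and> X ! j < v})"
    unfolding residual_size_def Let_def n_def u_def v_def by blast
  then show ?thesis
    using that by (auto simp del: atLeastLessThan_iff split: if_splits)
qed

lemma residual_size_le_length: "residual_size X k s g I \<le> length X"
  by (cases rule: residual_size_cases[of X k s g I])
    (simp_all del: atLeastLessThan_iff add: card_filter_atLeastLessThan_le)

lemma card_filter_atLeastLessThan_add_not: "card {j\<in>{0..<n}. P j} + card {j\<in>{0..<n}. \<not> P j} = n"
proof -
  have "card ({j\<in>{0..<n}. P j} \<union> {j\<in>{0..<n}. \<not> P j}) = card {j\<in>{0..<n}. P j} + card {j\<in>{0..<n}. \<not> P j}"
    by (rule card_Un_disjoint) auto
  moreover have "{j\<in>{0..<n}. P j} \<union> {j\<in>{0..<n}. \<not> P j} = {0..<n}"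
    by blast
  ultimately show ?thesis
    by simp
qed

lemma card_between_eq_diff:
  fixes X :: "'a::linorder list"
  assumes "u < v"
  shows "real (card {j\<in>{0..<n}. u < X ! j \<and> X ! j < v})
           = real (card {j\<in>{0..<n}. X ! j < v}) - real (card {j\<in>{0..<n}. X ! j \<le> u})"
proof -
  have "{j\<in>{0..<n}. X ! j \<le> u} \<subseteq> {j\<in>{0..<n}. X ! j < v}"
    and "{j\<in>{0..<n}. u < X ! j \<and> X ! j < v} = {j\<in>{0..<n}. X ! j < v} - {j\<in>{0..<n}. X ! j \<le> u}"
    using assms by auto
  then show ?thesis
    by (simp add: card_Diff_subset card_mono)
qed

lemma residual_size_large_cases:
  fixes X :: "'a::linorder list" and k s :: nat and g T :: real and I :: "nat set"
  defines "n \<equiv> length X" and "u \<equiv> pivot_u X k s g I" and "v \<equiv> pivot_v X k s g I"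
  assumes "0 < T" and "T \<le> real (residual_size X k s g I)"
  shows "max (real k) T \<le> real (card {j\<in>{0..<n}. X ! j < u})
       \<or> real (card {j\<in>{0..<n}. X ! j \<le> v}) \<le> min (real k - 1) (real n - T)
       \<or> real (card {j\<in>{0..<n}. X ! j \<le> u}) \<le> real k - T / 2
       \<or> real k + T / 2 \<le> real (card {j\<in>{0..<n}. X ! j < v})"
proof (cases rule: residual_size_cases[of X k s g I])
  case 1
  then show ?thesis
    using assms by simp
next
  case 2
  then show ?thesis
    using assms by (simp add: n_def u_def)
next
  case 3
  have "card {j\<in>{0..<n}. X ! j \<le> v} + card {j\<in>{0..<n}. v < X ! j} = n"
    using card_filter_atLeastLessThan_add_not[of n "\<lambda>j. X ! j \<le> v"] by (simp add: not_le)
  moreover have "n - card {j\<in>{0..<n}. v < X ! j} < k"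
    and "T \<le> real (card {j\<in>{0..<n}. v < X ! j})"
    using 3 assms(5) by (simp_all add: n_def v_def)
  ultimately have "real (card {j\<in>{0..<n}. X ! j \<le> v}) \<le> min (real k - 1) (real n - T)"
    by linarith
  then show ?thesis
    by blast
next
  case 4
  have large: "T \<le> real (card {j\<in>{0..<n}. u < X ! j \<and> X ! j < v})"
    using 4 assms by (simp add: n_def u_def v_def)
  then have "0 < real (card {j\<in>{0..<n}. u < X ! j \<and> X ! j < v})"
    using \<open>0 < T\<close> by linarith
  then obtain j where "j \<in> {j\<in>{0..<n}. u < X ! j \<and> X ! j < v}"
    by (metis all_not_in_conv card.empty of_nat_0 less_irrefl)
  then have "u < v"
    by auto
  then show ?thesis
    using large card_between_eq_diff[of u v n X] by linarith
qed

lemma idx_u_bounds: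
  assumes "k \<le> n" "1 \<le> s" "0 < g"
  shows "1 \<le> idx_u n k s g" "idx_u n k s g \<le> s"
    and "real k * real s / real n - g \<le> real (idx_u n k s g)"
    and "idx_u n k s g = 1 \<or> real (idx_u n k s g) - 1 < real k * real s / real n - g"
proof -
  define x where "x = real k * real s / real n - g"
  have idx: "idx_u n k s g = nat (max \<lceil>x\<rceil> 1)"
    by (simp add: idx_u_def x_def)
  have "real k * real s / real n \<le> real s"
    using assms by (cases "n = 0") (auto simp: field_simps mult_right_mono)
  then have "\<lceil>x\<rceil> \<le> int s"
    using assms by (simp add: x_def ceiling_le_iff)
  then show "1 \<le> idx_u n k s g" "idx_u n k s g \<le> s"
    using \<open>1 \<le> s\<close> by (simp_all add: idx)
  have "real (idx_u n k s g) = max (real_of_int \<lceil>x\<rceil>) 1"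
    by (simp add: idx)
  then show "real k * real s / real n - g \<le> real (idx_u n k s g)"
    and "idx_u n k s g = 1 \<or> real (idx_u n k s g) - 1 < real k * real s / real n - g"
    using ceiling_correct[of x] unfolding x_def[symmetric] by (auto simp: idx max_def)
qed

lemma idx_v_bounds:
  assumes "1 \<le> s" "0 < g"
  shows "1 \<le> idx_v n k s g" "idx_v n k s g \<le> s"
    and "real (idx_v n k s g) - 1 < real k * real s / real n + g"
    and "idx_v n k s g = s \<or> real k * real s / real n + g \<le> real (idx_v n k s g)"
proof -
  define x where "x = real k * real s / real n + g"
  have "0 < x"
    using assms by (simp add: x_def add_nonneg_pos)
  then have "1 \<le> \<lceil>x\<rceil>"
    by simp
  then have idx: "real (idx_v n k s g) = min (real_of_int \<lceil>x\<rceil>) (real s)"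
    by (simp add: idx_v_def x_def)
  show "1 \<le> idx_v n k s g"
    using \<open>1 \<le> \<lceil>x\<rceil>\<close> \<open>1 \<le> s\<close> by (simp add: idx_v_def x_def le_nat_iff)
  show "idx_v n k s g \<le> s"
    by (simp add: idx_v_def)
  show "real (idx_v n k s g) - 1 < real k * real s / real n + g"
    using idx ceiling_correct[of x] by (simp add: x_def)
  show "idx_v n k s g = s \<or> real k * real s / real n + g \<le> real (idx_v n k s g)"
    using idx le_of_int_ceiling[of x] unfolding x_def[symmetric] by (cases "int s \<le> \<lceil>x\<rceil>") auto
qed

lemma expectation_le_threshold_plus_tail:
  fixes f :: "'a \<Rightarrow> real"
  assumes "integrable (measure_pmf p) f" and "\<And>x. x \<in> set_pmf p \<Longrightarrow> f x \<le> b" and "0 \<le> T"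
  shows "measure_pmf.expectation p f \<le> T + b * measure_pmf.prob p {x. T \<le> f x}"
proof -
  have "f x \<le> T + b * indicator {x. T \<le> f x} x" if "x \<in> set_pmf p" for x
    using assms(2)[OF that] \<open>0 \<le> T\<close> by (cases "T \<le> f x") auto
  moreover have "integrable (measure_pmf p) (\<lambda>x. T + b * indicator {x. T \<le> f x} x)"
    by (simp add: less_top[symmetric])
  ultimately have "measure_pmf.expectation p f \<le> measure_pmf.expectation p (\<lambda>x. T + b * indicator {x. T \<le> f x} x)"
    using assms(1) by (intro integral_mono_AE) (auto simp: AE_measure_pmf_iff)
  also have "\<dots> = T + b * measure_pmf.prob p {x. T \<le> f x}"
    by (simp add: less_top[symmetric] measure_pmf.prob_space)
  finally show ?thesis .
qed

lemma prob_lower_pivot_far: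
  fixes X :: "'a::linorder list" and n k s :: nat and g :: real
  defines "T \<equiv> 4 * g * real n / real s" and "iu \<equiv> idx_u n k s g"
  assumes "k \<le> n" "1 \<le> s" "s \<le> n" "0 < g"
  shows "measure_pmf.prob (pmf_of_set (sample_space n s))
           {I. max (real k) T \<le> real (card {j\<in>{0..<n}. X ! j < ystar X I iu})} \<le> exp (- 2 * g\<^sup>2 / real s)"
    and "measure_pmf.prob (pmf_of_set (sample_space n s))
           {I. real (card {j\<in>{0..<n}. X ! j \<le> ystar X I iu}) \<le> real k - T / 2} \<le> exp (- 2 * g\<^sup>2 / real s)"
proof -
  have "0 < n"
    using assms by linarith
  note u = idx_u_bounds[OF \<open>k \<le> n\<close> \<open>1 \<le> s\<close> \<open>0 < g\<close>, folded iu_def]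
  have "real s * T / real n = 4 * g"
    using \<open>0 < n\<close> \<open>1 \<le> s\<close> by (simp add: T_def)
  then have "real iu - 1 + g \<le> real s * max (real k) T / real n"
    using u(4) of_nat_mult_divide_mono[of "real k" "max (real k) T" s n]
      of_nat_mult_divide_mono[of T "max (real k) T" s n] \<open>0 < g\<close> by (auto simp: mult.commute)
  then show "measure_pmf.prob (pmf_of_set (sample_space n s))
           {I. max (real k) T \<le> real (card {j\<in>{0..<n}. X ! j < ystar X I iu})} \<le> exp (- 2 * g\<^sup>2 / real s)"
    using u(1,2) assms by (intro prob_card_less_ystar_ge) auto
  have "real s * (real k - T / 2) / real n = real k * real s / real n - 2 * g"
    using \<open>0 < n\<close> \<open>1 \<le> s\<close> by (simp add: T_def field_simps)
  then show "measure_pmf.prob (pmf_of_set (sample_space n s))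
           {I. real (card {j\<in>{0..<n}. X ! j \<le> ystar X I iu}) \<le> real k - T / 2} \<le> exp (- 2 * g\<^sup>2 / real s)"
    using u(1-3) assms by (intro prob_card_le_ystar_le) auto
qed

lemma prob_upper_pivot_far:
  fixes X :: "'a::linorder list" and n k s :: nat and g :: real
  defines "T \<equiv> 4 * g * real n / real s" and "iv \<equiv> idx_v n k s g"
  assumes "1 \<le> s" "s \<le> n" "0 < g"
  shows "measure_pmf.prob (pmf_of_set (sample_space n s))
           {I. real (card {j\<in>{0..<n}. X ! j \<le> ystar X I iv}) \<le> min (real k - 1) (real n - T)}
           \<le> exp (- 2 * g\<^sup>2 / real s)"
    and "measure_pmf.prob (pmf_of_set (sample_space n s))
           {I. real k + T / 2 \<le> real (card {j\<in>{0..<n}. X ! j < ystar X I iv})} \<le> exp (- 2 * g\<^sup>2 / real s)"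
proof -
  have "0 < n"
    using assms by linarith
  note v = idx_v_bounds[OF \<open>1 \<le> s\<close> \<open>0 < g\<close>, of n k, folded iv_def]
  have "real s * (real n - T) / real n = real s - 4 * g"
    using \<open>0 < n\<close> \<open>1 \<le> s\<close> by (simp add: T_def field_simps)
  moreover have "min (real k - 1) (real n - T) \<le> real k"
    by simp
  ultimately have "real s * min (real k - 1) (real n - T) / real n + g \<le> real iv"
    using v(4) of_nat_mult_divide_mono[of "min (real k - 1) (real n - T)" "real n - T" s n]
      of_nat_mult_divide_mono[of "min (real k - 1) (real n - T)" "real k" s n] \<open>0 < g\<close>
    by (auto simp: mult.commute)
  then show "measure_pmf.prob (pmf_of_set (sample_space n s))
           {I. real (card {j\<in>{0..<n}. X ! j \<le> ystar X I iv}) \<le> min (real k - 1) (real n - T)}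
           \<le> exp (- 2 * g\<^sup>2 / real s)"
    using v(1,2) assms by (intro prob_card_le_ystar_le) auto
  have "real s * (real k + T / 2) / real n = real k * real s / real n + 2 * g"
    using \<open>0 < n\<close> \<open>1 \<le> s\<close> by (simp add: T_def field_simps)
  then show "measure_pmf.prob (pmf_of_set (sample_space n s))
           {I. real k + T / 2 \<le> real (card {j\<in>{0..<n}. X ! j < ystar X I iv})} \<le> exp (- 2 * g\<^sup>2 / real s)"
    using v(1-3) assms by (intro prob_card_less_ystar_ge) auto
qed

lemma prob_residual_size_ge:
  fixes X :: "'a::linorder list" and k s :: nat and g :: real
  defines "n \<equiv> length X"
  assumes "1 \<le> k" "k \<le> n" "1 \<le> s" "s \<le> n" "0 < g"
  shows "measure_pmf.prob (pmf_of_set (sample_space n s))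
           {I. 4 * g * real n / real s \<le> real (residual_size X k s g I)} \<le> 4 * exp (- 2 * g\<^sup>2 / real s)"
proof -
  define T where "T = 4 * g * real n / real s"
  define iu where "iu = idx_u n k s g"
  define iv where "iv = idx_v n k s g"
  define E1 where "E1 = {I. max (real k) T \<le> real (card {j\<in>{0..<n}. X ! j < ystar X I iu})}"
  define E2 where "E2 = {I. real (card {j\<in>{0..<n}. X ! j \<le> ystar X I iv}) \<le> min (real k - 1) (real n - T)}"
  define E3 where "E3 = {I. real (card {j\<in>{0..<n}. X ! j \<le> ystar X I iu}) \<le> real k - T / 2}"
  define E4 where "E4 = {I. real k + T / 2 \<le> real (card {j\<in>{0..<n}. X ! j < ystar X I iv})}"
  let ?P = "measure_pmf (pmf_of_set (sample_space n s))"
  have "0 < n"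
    using assms by linarith
  then have "0 < T"
    using assms by (simp add: T_def)
  then have "{I. T \<le> real (residual_size X k s g I)} \<subseteq> E1 \<union> E2 \<union> E3 \<union> E4"
    using residual_size_large_cases[of T X k s g]
    unfolding E1_def E2_def E3_def E4_def iu_def iv_def pivot_u_def pivot_v_def n_def by blast
  then have "measure ?P {I. T \<le> real (residual_size X k s g I)} \<le> measure ?P (E1 \<union> E2 \<union> E3 \<union> E4)"
    by (intro measure_pmf.finite_measure_mono) simp_all
  also have "\<dots> \<le> measure ?P E1 + measure ?P E2 + measure ?P E3 + measure ?P E4"
    using measure_Un_le[of "E1 \<union> E2 \<union> E3" ?P E4] measure_Un_le[of "E1 \<union> E2" ?P E3]
      measure_Un_le[of E1 ?P E2] by simp
  also have "\<dots> \<le> 4 * exp (- 2 * g\<^sup>2 / real s)"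
    using prob_lower_pivot_far[where X = X and n = n and k = k and s = s and g = g]
      prob_upper_pivot_far[where X = X and n = n and k = k and s = s and g = g] assms
    unfolding E1_def E2_def E3_def E4_def T_def iu_def iv_def by fastforce
  finally show ?thesis
    by (simp add: T_def)
qed

theorem lemma3p3:
  fixes X :: "'a::linorder list" and k s :: nat and g :: real
  defines "n \<equiv> length X"
  defines "P \<equiv> pmf_of_set (sample_space n s)"
  assumes "n \<ge> 2" and "1 \<le> k" and "k \<le> n" and "1 \<le> s" and "s \<le> n - 1" and "g > 0"
  shows "measure_pmf.prob P {I. real (residual_size X k s g I) < 4 * g * real n / real s}
           \<ge> 1 - 4 * exp (- 2 * g\<^sup>2 / real s) \<and>
         measure_pmf.expectation P (\<lambda>I. real (residual_size X k s g I))
           \<le> 4 * g * real n / real s + 4 * real n * exp (- 2 * g\<^sup>2 / real s)"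
proof -
  define T where "T = 4 * g * real n / real s"
  define bad where "bad = {I. T \<le> real (residual_size X k s g I)}"
  have "s \<le> n"
    using assms by linarith
  have tail: "measure_pmf.prob P bad \<le> 4 * exp (- 2 * g\<^sup>2 / real s)"
    using prob_residual_size_ge[of k X s g] \<open>s \<le> n\<close> assms by (simp add: P_def n_def bad_def T_def)
  have "measure_pmf.prob P {I. real (residual_size X k s g I) < T} = 1 - measure_pmf.prob P bad"
    using measure_pmf.prob_compl[of bad P] by (simp add: bad_def set_diff_eq not_le)
  moreover have "measure_pmf.expectation P (\<lambda>I. real (residual_size X k s g I))
                   \<le> T + real n * measure_pmf.prob P bad"
    unfolding bad_def using residual_size_le_length[of X k s g] sample_space_nonempty[of s n] \<open>s \<le> n\<close> assms
    by (intro expectation_le_threshold_plus_tail)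
      (simp_all add: P_def n_def T_def integrable_measure_pmf_finite finite_sample_space)
  moreover have "real n * measure_pmf.prob P bad \<le> real n * (4 * exp (- 2 * g\<^sup>2 / real s))"
    using tail by (intro mult_left_mono) auto
  ultimately show ?thesis
    using tail by (simp add: T_def)
qed

end
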